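(* Let $a<b$, $1<p<\infty$, $q=p/(p-1)$, $\Delta=\{(t,\tau):a\le\tau<t\le b\}$, $k\in L^q(\Delta;\mathbb{R})$, $\lambda,\mu\in\mathbb{R}$, and let $K_P,K_{P^*},A_{P^*},B_P$ be as in the context. Let $F:\mathbb{R}^4\times[a,b]\to\mathbb{R}$ be of class $C^1$, $y_a,y_b\in\mathbb{R}$, $\mathcal{A}(y_a,y_b)=\{y\in C^1([a,b];\mathbb{R}): y(a)=y_a,\ y(b)=y_b,\ K_P[y],B_P[y]\in C([a,b];\mathbb{R})\}$, and, with $(\star_y)(t)=(y(t),K_P[y](t),\dot y(t),B_P[y](t),t)$, assume that for every $y\in\mathcal{A}(y_a,y_b)$: $K_{P^*}[\tau\mapsto\partial_2F(\star_y)(\tau)]\in C([a,b];\mathbb{R})$, $t\mapsto\partial_3F(\star_y)(t)\in C^1([a,b];\mathbb{R})$, $K_{P^*}[\tau\mapsto\partial_4F(\star_y)(\tau)]\in C^1([a,b];\mathbb{R})$. Let $\mathcal{I}(y)=\int_a^bF(\star_y)(t)\,dt$. Suppose $\bar y\in\mathcal{A}(y_a,y_b)$ satisfies, for all $t\in(a,b)$, $$\frac{d}{dt}\big[\partial_3F(\star_{\bar y})(t)\big]+A_{P^*}\big[\tau\mapsto\partial_4F(\star_{\bar y})(\tau)\big](t)=\partial_1F(\star_{\bar y})(t)+K_{P^*}\big[\tau\mapsto\partial_2F(\star_{\bar y})(\tau)\big](t),$$ and that $(x_1,x_2,x_3,x_4)\mapsto F(x_1,x_2,x_3,x_4,t)$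 is convex for every $t\in[a,b]$. Then $\bar y$ is a minimizer of $\mathcal{I}$ on $\mathcal{A}(y_a,y_b)$.
   Context: $K_P[f](t)=\lambda\int_a^t k(t,\tau)f(\tau)d\tau+\mu\int_t^b k(\tau,t)f(\tau)d\tau$; $K_{P^*}[f](t)=\mu\int_a^t k(t,\tau)f(\tau)d\tau+\lambda\int_t^b k(\tau,t)f(\tau)d\tau$; $A_{P^*}=\frac{d}{dt}\circ K_{P^*}$; $B_P=K_P\circ\frac{d}{dt}$. $\partial_iF$ is the partial derivative of $F$ with respect to its $i$-th argument. A minimizer of $\mathcal{I}$ on $\mathcal{A}$ is $\bar y\in\mathcal{A}$ with $\mathcal{I}(\bar y)\le\mathcal{I}(y)$ for all $y\in\mathcal{A}$ in some norm-neighborhood of $\bar y$. *)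

theory Defs
  imports "HOL-Analysis.Analysis"
begin

definition Delta :: "real \<Rightarrow> real \<Rightarrow> (real \<times> real) set" where
  "Delta a b = {(t, \<tau>). a \<le> \<tau> \<and> \<tau> < t \<and> t \<le> b}"

definition in_Lq :: "real \<Rightarrow> (real \<times> real) set \<Rightarrow> (real \<times> real \<Rightarrow> real) \<Rightarrow> bool" where
  "in_Lq q D k \<longleftrightarrow> set_borel_measurable lborel D k \<and>
     set_integrable lborel D (\<lambda>x. \<bar>k x\<bar> powr q)"

definition KP :: "real \<Rightarrow> real \<Rightarrow> real \<Rightarrow> real \<Rightarrow> (real \<times> real \<Rightarrow> real)
                  \<Rightarrow> (real \<Rightarrow> real) \<Rightarrow> real \<Rightarrow> real" where
  "KP a b lam mu k f t =
     lam * (LINT \<tau>:{a..t}|lborel. k (t, \<tau>) * f \<tau>) + mu * (LINT \<tau>:{t..b}|lborel. k (\<tau>, t) * f \<tau>)"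

definition KPs :: "real \<Rightarrow> real \<Rightarrow> real \<Rightarrow> real \<Rightarrow> (real \<times> real \<Rightarrow> real)
                  \<Rightarrow> (real \<Rightarrow> real) \<Rightarrow> real \<Rightarrow> real" where
  "KPs a b lam mu k f t = KP a b mu lam k f t"

definition dotd :: "real \<Rightarrow> real \<Rightarrow> (real \<Rightarrow> real) \<Rightarrow> real \<Rightarrow> real" where
  "dotd a b y t = vector_derivative y (at t within {a..b})"

definition APs :: "real \<Rightarrow> real \<Rightarrow> real \<Rightarrow> real \<Rightarrow> (real \<times> real \<Rightarrow> real)
                  \<Rightarrow> (real \<Rightarrow> real) \<Rightarrow> real \<Rightarrow> real" where
  "APs a b lam mu k f t = dotd a b (KPs a b lam mu k f) t"

definition BP :: "real \<Rightarrow> real \<Rightarrow> real \<Rightarrow> real \<Rightarrow> (real \<times> real \<Rightarrow> real)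
                  \<Rightarrow> (real \<Rightarrow> real) \<Rightarrow> real \<Rightarrow> real" where
  "BP a b lam mu k y t = KP a b lam mu k (dotd a b y) t"

definition C1_interval :: "real \<Rightarrow> real \<Rightarrow> (real \<Rightarrow> real) \<Rightarrow> bool" where
  "C1_interval a b f \<longleftrightarrow> (\<exists>f'. continuous_on {a..b} f' \<and>
      (\<forall>t\<in>{a..b}. (f has_real_derivative f' t) (at t within {a..b})))"

definition C1_on :: "'a::real_normed_vector set \<Rightarrow> ('a \<Rightarrow> real) \<Rightarrow> bool" where
  "C1_on S F \<longleftrightarrow> (\<exists>F'. (\<forall>z\<in>S. (F has_derivative F' z) (at z within S)) \<and>
      (\<forall>v. continuous_on S (\<lambda>z. F' z v)))"

type_synonym arg5 = "real \<times> real \<times> real \<times> real \<times> real"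

definition d1 :: "(arg5 \<Rightarrow> real) \<Rightarrow> arg5 \<Rightarrow> real" where
  "d1 F z = (case z of (x1,x2,x3,x4,t) \<Rightarrow> deriv (\<lambda>s. F (s,x2,x3,x4,t)) x1)"
definition d2 :: "(arg5 \<Rightarrow> real) \<Rightarrow> arg5 \<Rightarrow> real" where
  "d2 F z = (case z of (x1,x2,x3,x4,t) \<Rightarrow> deriv (\<lambda>s. F (x1,s,x3,x4,t)) x2)"
definition d3 :: "(arg5 \<Rightarrow> real) \<Rightarrow> arg5 \<Rightarrow> real" where
  "d3 F z = (case z of (x1,x2,x3,x4,t) \<Rightarrow> deriv (\<lambda>s. F (x1,x2,s,x4,t)) x3)"
definition d4 :: "(arg5 \<Rightarrow> real) \<Rightarrow> arg5 \<Rightarrow> real" where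
  "d4 F z = (case z of (x1,x2,x3,x4,t) \<Rightarrow> deriv (\<lambda>s. F (x1,x2,x3,s,t)) x4)"

definition adm :: "real \<Rightarrow> real \<Rightarrow> real \<Rightarrow> real \<Rightarrow> (real \<times> real \<Rightarrow> real)
                   \<Rightarrow> real \<Rightarrow> real \<Rightarrow> (real \<Rightarrow> real) set" where
  "adm a b lam mu k ya yb = {y. C1_interval a b y \<and> y a = ya \<and> y b = yb \<and>
      continuous_on {a..b} (KP a b lam mu k y) \<and> continuous_on {a..b} (BP a b lam mu k y)}"

definition star :: "real \<Rightarrow> real \<Rightarrow> real \<Rightarrow> real \<Rightarrow> (real \<times> real \<Rightarrow> real)
                   \<Rightarrow> (real \<Rightarrow> real) \<Rightarrow> real \<Rightarrow> arg5" where
  "star a b lam mu k y t = (y t, KP a b lam mu k y t, dotd a b y t, BP a b lam mu k y t, t)"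

definition Ifun :: "real \<Rightarrow> real \<Rightarrow> real \<Rightarrow> real \<Rightarrow> (real \<times> real \<Rightarrow> real)
                   \<Rightarrow> (arg5 \<Rightarrow> real) \<Rightarrow> (real \<Rightarrow> real) \<Rightarrow> real" where
  "Ifun a b lam mu k F y = (LINT t:{a..b}|lborel. F (star a b lam mu k y t))"

definition local_minimizer :: "real \<Rightarrow> real \<Rightarrow> ((real \<Rightarrow> real) \<Rightarrow> real)
                               \<Rightarrow> (real \<Rightarrow> real) set \<Rightarrow> (real \<Rightarrow> real) \<Rightarrow> bool" where
  "local_minimizer a b I A ybar \<longleftrightarrow> ybar \<in> A \<and>
     (\<exists>\<epsilon>>0. \<forall>y\<in>A. (\<forall>t\<in>{a..b}. \<bar>y t - ybar t\<bar> < \<epsilon>) \<longrightarrow> I ybar \<le> I y)"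

end

theory Submission
  imports Defs
begin

text \<open>Convexity of F in its first four arguments bounds F(star y) - F(star ybar) from below by
  the linearisation at star ybar, whose integral is the first variation. In the first variation the
  K_P and B_P terms are moved onto the multipliers by the adjoint identity
  \<integral> g K_P[f] = \<integral> f K_{P*}[g] (Fubini on Delta, where k is integrable because q > 1 and Delta is
  bounded), and the derivative terms by integration by parts, y - ybar vanishing at a and b. This
  leaves \<integral> (y - ybar) times the Euler-Lagrange residual, which is zero. So I(ybar) \<le> I(y) for
  every admissible y: ybar is even a global minimizer.\<close>

lemma Delta_subset_cbox: "Delta a b \<subseteq> cbox (a, a) (b, b)"
  by (auto simp: Delta_def cbox_Pair_eq)

lemma Delta_in_sets_lborel: "Delta a b \<in> sets lborel"
proof -
  have eq: "Delta a b = {x. a \<le> snd x} \<inter> {x. snd x < fst x} \<inter> {x. fst x \<le> b}"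
    by (auto simp: Delta_def)
  have "closed {x::real \<times> real. a \<le> snd x}" "closed {x::real \<times> real. fst x \<le> b}"
    by (intro closed_Collect_le continuous_intros)+
  moreover have "open {x::real \<times> real. snd x < fst x}"
    by (intro open_Collect_less continuous_intros)
  ultimately show ?thesis
    unfolding eq sets_lborel by (intro sets.Int borel_closed borel_open) simp_all
qed

lemma emeasure_Delta_finite: "emeasure lborel (Delta a b) < \<infinity>"
proof -
  have "emeasure lborel (Delta a b) \<le> emeasure lborel (cbox (a, a) (b, b))"
    by (rule emeasure_mono[OF Delta_subset_cbox]) simp
  then show ?thesis
    using emeasure_lborel_cbox_finite[of "(a, a)" "(b, b)"] by (simp add: order_le_less_trans)
qed

lemma set_integrable_if_in_Lq:
  assumes q: "1 \<le> q" and k: "in_Lq q A k"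
    and A: "A \<in> sets lborel" "emeasure lborel A < \<infinity>"
  shows "set_integrable lborel A k"
proof (rule set_integrable_bound)
  have "set_integrable lborel A (\<lambda>_. 1 :: real)"
    using A by (simp add: set_integrable_def integrable_real_indicator)
  then show "set_integrable lborel A (\<lambda>x. \<bar>k x\<bar> powr q + 1)"
    using k by (auto simp: in_Lq_def)
  show "set_borel_measurable lborel A k"
    using k by (simp add: in_Lq_def)
  have "\<bar>k x\<bar> \<le> \<bar>k x\<bar> powr q + 1" for x
  proof (cases "\<bar>k x\<bar> \<le> 1")
    case False
    then have "\<bar>k x\<bar> powr 1 \<le> \<bar>k x\<bar> powr q"
      using q by (intro powr_mono) auto
    then show ?thesis using False by simp
  qed (use powr_ge_zero[of "\<bar>k x\<bar>" q] in linarith)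
  then show "AE x in lborel. x \<in> A \<longrightarrow> norm (k x) \<le> norm (\<bar>k x\<bar> powr q + 1)"
    by auto
qed

lemma set_integrable_mult_continuous_compact:
  fixes k h :: "'a::euclidean_space \<Rightarrow> real"
  assumes k: "set_integrable lborel A k"
    and S: "A \<subseteq> S" "compact S" and h: "continuous_on S h"
  shows "set_integrable lborel A (\<lambda>x. k x * h x)"
proof -
  obtain M where M: "\<And>x. x \<in> S \<Longrightarrow> \<bar>h x\<bar> \<le> M"
    using compact_imp_bounded[OF compact_continuous_image[OF h S(2)]]
    unfolding bounded_real by blast
  have "(\<lambda>x. indicator S x *\<^sub>R h x) \<in> borel_measurable borel"
    using S(2) h by (intro borel_measurable_continuous_on_indicator) (auto intro: borel_closed compact_imp_closed)
  moreover have "(\<lambda>x. indicator A x *\<^sub>R k x) \<in> borel_measurable lborel"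
    using k unfolding set_integrable_def by (rule borel_measurable_integrable)
  ultimately have "(\<lambda>x. (indicator A x *\<^sub>R k x) * (indicator S x *\<^sub>R h x)) \<in> borel_measurable lborel"
    by simp
  moreover have "(\<lambda>x. (indicator A x *\<^sub>R k x) * (indicator S x *\<^sub>R h x)) = (\<lambda>x. indicator A x *\<^sub>R (k x * h x))"
    using S(1) by (auto simp: fun_eq_iff split: split_indicator)
  ultimately have measurable: "set_borel_measurable lborel A (\<lambda>x. k x * h x)"
    unfolding set_borel_measurable_def by simp
  have bound: "norm (k x * h x) \<le> norm (M * k x)" if "x \<in> A" for x
  proof -
    have "\<bar>h x\<bar> \<le> \<bar>M\<bar>"
      using M[of x] S(1) that by auto
    then have "\<bar>h x\<bar> * \<bar>k x\<bar> \<le> \<bar>M\<bar> * \<bar>k x\<bar>"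
      by (rule mult_right_mono) simp
    then show ?thesis
      by (simp add: abs_mult mult.commute)
  qed
  show ?thesis
  proof (rule set_integrable_bound[where f = "\<lambda>x. M * k x"])
    show "set_integrable lborel A (\<lambda>x. M * k x)"
      using k by simp
    show "AE x in lborel. x \<in> A \<longrightarrow> norm (k x * h x) \<le> norm (M * k x)"
      using bound by simp
  qed (fact measurable)
qed

lemma integral_Delta_section_fst:
  fixes h :: "real \<Rightarrow> real"
  shows "(\<integral>\<tau>. indicator (Delta a b) (t, \<tau>) * h \<tau> \<partial>lborel) = indicator {a..b} t * (LINT \<tau>:{a..t}|lborel. h \<tau>)"
proof (cases "t \<in> {a..b}")
  case True
  then have "(\<integral>\<tau>. indicator (Delta a b) (t, \<tau>) * h \<tau> \<partial>lborel) = (LINT \<tau>:{a..<t}|lborel. h \<tau>)"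
    unfolding set_lebesgue_integral_def
    by (intro Bochner_Integration.integral_cong) (auto simp: Delta_def split: split_indicator)
  also have "\<dots> = (LINT \<tau>:{a..t}|lborel. h \<tau>)"
    by (rule set_integral_discrete_difference[where X = "{t}"]) auto
  finally show ?thesis using True by simp
qed (auto simp: Delta_def split: split_indicator)

lemma integral_Delta_section_snd:
  fixes h :: "real \<Rightarrow> real"
  shows "(\<integral>t. indicator (Delta a b) (t, \<tau>) * h t \<partial>lborel) = indicator {a..b} \<tau> * (LINT t:{\<tau>..b}|lborel. h t)"
proof (cases "\<tau> \<in> {a..b}")
  case True
  then have "(\<integral>t. indicator (Delta a b) (t, \<tau>) * h t \<partial>lborel) = (LINT t:{\<tau><..b}|lborel. h t)"
    unfolding set_lebesgue_integral_def
    by (intro Bochner_Integration.integral_cong) (auto simp: Delta_def split: split_indicator)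
  also have "\<dots> = (LINT t:{\<tau>..b}|lborel. h t)"
    by (rule set_integral_discrete_difference[where X = "{\<tau>}"]) auto
  finally show ?thesis using True by simp
qed (auto simp: Delta_def split: split_indicator)

lemma Fubini_Delta:
  fixes f g :: "real \<Rightarrow> real"
  assumes k: "set_integrable lborel (Delta a b) k"
    and f: "continuous_on {a..b} f" and g: "continuous_on {a..b} g"
  shows "set_integrable lborel {a..b} (\<lambda>t. g t * (LINT \<tau>:{a..t}|lborel. k (t, \<tau>) * f \<tau>))"
    and "set_integrable lborel {a..b} (\<lambda>\<tau>. f \<tau> * (LINT t:{\<tau>..b}|lborel. k (t, \<tau>) * g t))"
    and "(LINT t:{a..b}|lborel. g t * (LINT \<tau>:{a..t}|lborel. k (t, \<tau>) * f \<tau>))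
         = (LINT \<tau>:{a..b}|lborel. f \<tau> * (LINT t:{\<tau>..b}|lborel. k (t, \<tau>) * g t))"
proof -
  define H where "H t \<tau> = indicator (Delta a b) (t, \<tau>) * (k (t, \<tau>) * (g t * f \<tau>))" for t \<tau>
  have "continuous_on ({a..b} \<times> {a..b}) (\<lambda>x. g (fst x))" "continuous_on ({a..b} \<times> {a..b}) (\<lambda>x. f (snd x))"
    by (auto intro: continuous_on_compose2[OF g continuous_on_fst[OF continuous_on_id]]
        continuous_on_compose2[OF f continuous_on_snd[OF continuous_on_id]])
  then have "continuous_on (cbox (a, a) (b, b)) (\<lambda>x. g (fst x) * f (snd x))"
    by (simp add: cbox_Pair_eq continuous_on_mult)
  then have "set_integrable lborel (Delta a b) (\<lambda>x. k x * (g (fst x) * f (snd x)))"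
    by (rule set_integrable_mult_continuous_compact[OF k Delta_subset_cbox compact_cbox])
  then have H: "integrable (lborel \<Otimes>\<^sub>M lborel) (\<lambda>(t, \<tau>). H t \<tau>)"
    by (simp add: set_integrable_def H_def lborel_prod case_prod_beta')
  have fst_section: "(\<integral>\<tau>. H t \<tau> \<partial>lborel) = indicator {a..b} t * (g t * (LINT \<tau>:{a..t}|lborel. k (t, \<tau>) * f \<tau>))" for t
  proof -
    have "(\<integral>\<tau>. H t \<tau> \<partial>lborel) = g t * (\<integral>\<tau>. indicator (Delta a b) (t, \<tau>) * (k (t, \<tau>) * f \<tau>) \<partial>lborel)"
      unfolding H_def by (subst integral_mult_right_zero[symmetric]) (simp add: ac_simps)
    then show ?thesis
      by (simp only: integral_Delta_section_fst) (simp add: mult.left_commute)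
  qed
  have snd_section: "(\<integral>t. H t \<tau> \<partial>lborel) = indicator {a..b} \<tau> * (f \<tau> * (LINT t:{\<tau>..b}|lborel. k (t, \<tau>) * g t))" for \<tau>
  proof -
    have "(\<integral>t. H t \<tau> \<partial>lborel) = f \<tau> * (\<integral>t. indicator (Delta a b) (t, \<tau>) * (k (t, \<tau>) * g t) \<partial>lborel)"
      unfolding H_def by (subst integral_mult_right_zero[symmetric]) (simp add: ac_simps)
    then show ?thesis
      by (simp only: integral_Delta_section_snd) (simp add: mult.left_commute)
  qed
  show "set_integrable lborel {a..b} (\<lambda>t. g t * (LINT \<tau>:{a..t}|lborel. k (t, \<tau>) * f \<tau>))"
    using lborel_pair.integrable_fst[OF H] by (simp add: set_integrable_def fst_section)
  show "set_integrable lborel {a..b} (\<lambda>\<tau>. f \<tau> * (LINT t:{\<tau>..b}|lborel. k (t, \<tau>) * g t))"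
    using lborel_pair.integrable_snd[OF H] by (simp add: set_integrable_def snd_section)
  show "(LINT t:{a..b}|lborel. g t * (LINT \<tau>:{a..t}|lborel. k (t, \<tau>) * f \<tau>))
         = (LINT \<tau>:{a..b}|lborel. f \<tau> * (LINT t:{\<tau>..b}|lborel. k (t, \<tau>) * g t))"
    using lborel_pair.Fubini_integral[OF H]
    by (simp add: set_lebesgue_integral_def fst_section snd_section)
qed

lemma KP_adjoint:
  fixes f g :: "real \<Rightarrow> real"
  assumes k: "set_integrable lborel (Delta a b) k"
    and f: "continuous_on {a..b} f" and g: "continuous_on {a..b} g"
  shows "set_integrable lborel {a..b} (\<lambda>t. g t * KP a b lam mu k f t)"
    and "set_integrable lborel {a..b} (\<lambda>t. f t * KPs a b lam mu k g t)"
    and "(LINT t:{a..b}|lborel. g t * KP a b lam mu k f t) = (LINT t:{a..b}|lborel. f t * KPs a b lam mu k g t)"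
proof -
  define Lf where "Lf t = (LINT \<tau>:{a..t}|lborel. k (t, \<tau>) * f \<tau>)" for t
  define Lg where "Lg t = (LINT \<tau>:{a..t}|lborel. k (t, \<tau>) * g \<tau>)" for t
  define Rf where "Rf \<tau> = (LINT t:{\<tau>..b}|lborel. k (t, \<tau>) * f t)" for \<tau>
  define Rg where "Rg \<tau> = (LINT t:{\<tau>..b}|lborel. k (t, \<tau>) * g t)" for \<tau>
  note fg = Fubini_Delta[OF k f g, folded Lf_def Rg_def]
  note gf = Fubini_Delta[OF k g f, folded Lg_def Rf_def]
  have KP: "g t * KP a b lam mu k f t = lam * (g t * Lf t) + mu * (g t * Rf t)" for t
    by (simp add: KP_def Lf_def Rf_def algebra_simps)
  have KPs: "f t * KPs a b lam mu k g t = mu * (f t * Lg t) + lam * (f t * Rg t)" for t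
    by (simp add: KPs_def KP_def Lg_def Rg_def algebra_simps)
  show "set_integrable lborel {a..b} (\<lambda>t. g t * KP a b lam mu k f t)"
    unfolding KP using fg(1) gf(2) by auto
  show "set_integrable lborel {a..b} (\<lambda>t. f t * KPs a b lam mu k g t)"
    unfolding KPs using fg(2) gf(1) by auto
  show "(LINT t:{a..b}|lborel. g t * KP a b lam mu k f t) = (LINT t:{a..b}|lborel. f t * KPs a b lam mu k g t)"
    unfolding KP KPs using fg gf by (simp add: set_integral_add)
qed

text \<open>K_P need not be linear (LINT is 0 on non-integrable sections of k), so differences are
  transferred through the adjoint rather than written as K_P[f1 - f2].\<close>

lemma KP_adjoint_diff:
  fixes f1 f2 g :: "real \<Rightarrow> real"
  assumes k: "set_integrable lborel (Delta a b) k"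
    and f: "continuous_on {a..b} f1" "continuous_on {a..b} f2" and g: "continuous_on {a..b} g"
  shows "(LINT t:{a..b}|lborel. g t * (KP a b lam mu k f1 t - KP a b lam mu k f2 t))
       = (LINT t:{a..b}|lborel. (f1 t - f2 t) * KPs a b lam mu k g t)"
proof -
  note adj1 = KP_adjoint[OF k f(1) g, of lam mu] and adj2 = KP_adjoint[OF k f(2) g, of lam mu]
  have "(LINT t:{a..b}|lborel. g t * (KP a b lam mu k f1 t - KP a b lam mu k f2 t))
      = (LINT t:{a..b}|lborel. g t * KP a b lam mu k f1 t) - (LINT t:{a..b}|lborel. g t * KP a b lam mu k f2 t)"
    using adj1(1) adj2(1) by (simp add: right_diff_distrib)
  also have "\<dots> = (LINT t:{a..b}|lborel. f1 t * KPs a b lam mu k g t) - (LINT t:{a..b}|lborel. f2 t * KPs a b lam mu k g t)"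
    using adj1(3) adj2(3) by simp
  also have "\<dots> = (LINT t:{a..b}|lborel. (f1 t - f2 t) * KPs a b lam mu k g t)"
    using adj1(2) adj2(2) by (simp add: left_diff_distrib)
  finally show ?thesis .
qed

lemma dotd_eqI:
  assumes "a < b" "t \<in> {a..b}" "(y has_real_derivative D) (at t within {a..b})"
  shows "dotd a b y t = D"
  unfolding dotd_def
  using assms by (intro vector_derivative_within_closed_interval)
    (simp_all add: has_real_derivative_iff_has_vector_derivative)

lemma C1_interval_has_derivative_dotd:
  assumes ab: "a < b" and y: "C1_interval a b y" and t: "t \<in> {a..b}"
  shows "(y has_real_derivative dotd a b y t) (at t within {a..b})"
proof -
  obtain y' where "\<And>t. t \<in> {a..b} \<Longrightarrow> (y has_real_derivative y' t) (at t within {a..b})"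
    using y unfolding C1_interval_def by blast
  then show ?thesis
    using dotd_eqI[OF ab t] t by metis
qed

lemma C1_interval_imp_continuous_on: "C1_interval a b y \<Longrightarrow> continuous_on {a..b} y"
  unfolding C1_interval_def continuous_on_eq_continuous_within
  using DERIV_continuous by blast

lemma continuous_on_dotd:
  assumes ab: "a < b" and y: "C1_interval a b y"
  shows "continuous_on {a..b} (dotd a b y)"
proof -
  obtain y' where y': "continuous_on {a..b} y'"
    and dy: "\<And>t. t \<in> {a..b} \<Longrightarrow> (y has_real_derivative y' t) (at t within {a..b})"
    using y unfolding C1_interval_def by blast
  have "dotd a b y t = y' t" if "t \<in> {a..b}" for t
    using dotd_eqI[OF ab that dy[OF that]] .
  then show ?thesis
    using continuous_on_cong y' by blast
qed

lemma C1_interval_diff: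
  assumes "C1_interval a b y" "C1_interval a b z"
  shows "C1_interval a b (\<lambda>t. y t - z t)"
proof -
  obtain y' z' where "continuous_on {a..b} y'" "continuous_on {a..b} z'"
    and "\<And>t. t \<in> {a..b} \<Longrightarrow> (y has_real_derivative y' t) (at t within {a..b})"
    and "\<And>t. t \<in> {a..b} \<Longrightarrow> (z has_real_derivative z' t) (at t within {a..b})"
    using assms unfolding C1_interval_def by metis
  then show ?thesis
    unfolding C1_interval_def
    by (intro exI[of _ "\<lambda>t. y' t - z' t"]) (auto intro: continuous_intros DERIV_diff)
qed

lemma dotd_diff:
  assumes ab: "a < b" and "C1_interval a b y" "C1_interval a b z" and t: "t \<in> {a..b}"
  shows "dotd a b (\<lambda>t. y t - z t) t = dotd a b y t - dotd a b z t"
  using assms by (intro dotd_eqI DERIV_diff C1_interval_has_derivative_dotd)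

lemma integral_by_parts_vanishing_boundary:
  fixes u h :: "real \<Rightarrow> real"
  assumes ab: "a < b" and u: "C1_interval a b u" "u a = 0" "u b = 0" and h: "C1_interval a b h"
  shows "(LINT t:{a..b}|lborel. dotd a b u t * h t) = - (LINT t:{a..b}|lborel. u t * dotd a b h t)"
proof -
  note cont = C1_interval_imp_continuous_on[OF u(1)] C1_interval_imp_continuous_on[OF h]
    continuous_on_dotd[OF ab u(1)] continuous_on_dotd[OF ab h]
  have "(LBINT t=a..b. dotd a b u t * h t + u t * dotd a b h t) = u b * h b - u a * h a"
  proof (rule interval_integral_FTC_finite)
    show "continuous_on {min a b..max a b} (\<lambda>t. dotd a b u t * h t + u t * dotd a b h t)"
      using ab cont by (auto intro!: continuous_intros)
    fix t assume "min a b \<le> t" "t \<le> max a b"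
    then have t: "t \<in> {a..b}" using ab by auto
    have "((\<lambda>t. u t * h t) has_real_derivative dotd a b u t * h t + u t * dotd a b h t) (at t within {a..b})"
      using DERIV_mult'[OF C1_interval_has_derivative_dotd[OF ab u(1) t] C1_interval_has_derivative_dotd[OF ab h t]]
      by (simp add: add.commute)
    then show "((\<lambda>t. u t * h t) has_vector_derivative dotd a b u t * h t + u t * dotd a b h t) (at t within {min a b..max a b})"
      using ab by (simp add: has_real_derivative_iff_has_vector_derivative)
  qed
  then have "(LINT t:{a..b}|lborel. dotd a b u t * h t + u t * dotd a b h t) = 0"
    using ab u by (simp add: interval_integral_Icc)
  moreover have "set_integrable lborel {a..b} (\<lambda>t. dotd a b u t * h t)"
    "set_integrable lborel {a..b} (\<lambda>t. u t * dotd a b h t)"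
    using cont by (auto intro!: borel_integrable_atLeastAtMost' continuous_intros)
  ultimately show ?thesis
    by simp
qed

lemma integral_by_parts_same_boundary:
  fixes y z h :: "real \<Rightarrow> real"
  assumes ab: "a < b" and y: "C1_interval a b y" and z: "C1_interval a b z"
    and ends: "y a = z a" "y b = z b" and h: "C1_interval a b h"
  shows "(LINT t:{a..b}|lborel. (dotd a b y t - dotd a b z t) * h t)
       = - (LINT t:{a..b}|lborel. (y t - z t) * dotd a b h t)"
proof -
  have "(LINT t:{a..b}|lborel. (dotd a b y t - dotd a b z t) * h t)
      = (LINT t:{a..b}|lborel. dotd a b (\<lambda>t. y t - z t) t * h t)"
    using y z by (intro set_lebesgue_integral_cong) (simp_all add: dotd_diff[OF ab])
  also have "\<dots> = - (LINT t:{a..b}|lborel. (y t - z t) * dotd a b h t)"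
    using ends by (intro integral_by_parts_vanishing_boundary ab h C1_interval_diff y z) simp_all
  finally show ?thesis .
qed

lemma has_real_derivative_along_line:
  fixes F :: "'a::real_normed_vector \<Rightarrow> real"
  assumes F: "\<And>z. z \<in> S \<Longrightarrow> (F has_derivative F' z) (at z within S)"
    and line: "\<And>s. x + s *\<^sub>R v \<in> S"
  shows "((\<lambda>s. F (x + s *\<^sub>R v)) has_real_derivative F' (x + s *\<^sub>R v) v) (at s)"
proof -
  have "((\<lambda>s. x + s *\<^sub>R v) has_derivative (\<lambda>h. h *\<^sub>R v)) (at s)"
    by (auto intro!: derivative_eq_intros)
  then have "((\<lambda>s. F (x + s *\<^sub>R v)) has_derivative (\<lambda>h. F' (x + s *\<^sub>R v) (h *\<^sub>R v))) (at s)"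
    using has_derivative_in_compose2[OF F, of "\<lambda>s. x + s *\<^sub>R v" UNIV s] line by blast
  moreover have "linear (F' (x + s *\<^sub>R v))"
    using F[OF line] by (rule has_derivative_linear)
  then have "(\<lambda>h. F' (x + s *\<^sub>R v) (h *\<^sub>R v)) = (\<lambda>h. F' (x + s *\<^sub>R v) v * h)"
    by (auto simp: linear_scale mult.commute)
  ultimately show ?thesis
    by (simp add: has_field_derivative_def)
qed

lemma convex_on_line:
  fixes G :: "'a::real_vector \<Rightarrow> real"
  assumes "convex_on UNIV G"
  shows "convex_on UNIV (\<lambda>s::real. G (p + s *\<^sub>R q))"
proof (rule convex_onI)
  fix s r u :: real
  assume u: "0 < u" "u < 1"
  have "p + ((1 - u) *\<^sub>R s + u *\<^sub>R r) *\<^sub>R q = (1 - u) *\<^sub>R (p + s *\<^sub>R q) + u *\<^sub>R (p + r *\<^sub>R q)"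
    by (simp add: algebra_simps)
  then show "G (p + ((1 - u) *\<^sub>R s + u *\<^sub>R r) *\<^sub>R q) \<le> (1 - u) * G (p + s *\<^sub>R q) + u * G (p + r *\<^sub>R q)"
    using convex_onD[OF assms, of u] u by simp
qed simp

abbreviation time_slab :: "real \<Rightarrow> real \<Rightarrow> arg5 set" where
  "time_slab a b \<equiv> UNIV \<times> UNIV \<times> UNIV \<times> UNIV \<times> {a..b}"

lemma partial_derivatives_eq:
  fixes F :: "arg5 \<Rightarrow> real"
  assumes F: "\<And>z. z \<in> time_slab a b \<Longrightarrow> (F has_derivative F' z) (at z within time_slab a b)"
    and z: "z \<in> time_slab a b"
  shows "d1 F z = F' z (1, 0, 0, 0, 0)" "d2 F z = F' z (0, 1, 0, 0, 0)"
    "d3 F z = F' z (0, 0, 1, 0, 0)" "d4 F z = F' z (0, 0, 0, 1, 0)"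
proof -
  obtain x1 x2 x3 x4 t where zt: "z = (x1, x2, x3, x4, t)" and t: "t \<in> {a..b}"
    using z by auto
  have "((\<lambda>s. F ((0, x2, x3, x4, t) + s *\<^sub>R (1, 0, 0, 0, 0))) has_real_derivative
      F' ((0, x2, x3, x4, t) + x1 *\<^sub>R (1, 0, 0, 0, 0)) (1, 0, 0, 0, 0)) (at x1)"
    by (rule has_real_derivative_along_line[OF F]) (use t in auto)
  then show "d1 F z = F' z (1, 0, 0, 0, 0)"
    unfolding zt d1_def by (simp add: DERIV_imp_deriv)
  have "((\<lambda>s. F ((x1, 0, x3, x4, t) + s *\<^sub>R (0, 1, 0, 0, 0))) has_real_derivative
      F' ((x1, 0, x3, x4, t) + x2 *\<^sub>R (0, 1, 0, 0, 0)) (0, 1, 0, 0, 0)) (at x2)"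
    by (rule has_real_derivative_along_line[OF F]) (use t in auto)
  then show "d2 F z = F' z (0, 1, 0, 0, 0)"
    unfolding zt d2_def by (simp add: DERIV_imp_deriv)
  have "((\<lambda>s. F ((x1, x2, 0, x4, t) + s *\<^sub>R (0, 0, 1, 0, 0))) has_real_derivative
      F' ((x1, x2, 0, x4, t) + x3 *\<^sub>R (0, 0, 1, 0, 0)) (0, 0, 1, 0, 0)) (at x3)"
    by (rule has_real_derivative_along_line[OF F]) (use t in auto)
  then show "d3 F z = F' z (0, 0, 1, 0, 0)"
    unfolding zt d3_def by (simp add: DERIV_imp_deriv)
  have "((\<lambda>s. F ((x1, x2, x3, 0, t) + s *\<^sub>R (0, 0, 0, 1, 0))) has_real_derivative
      F' ((x1, x2, x3, 0, t) + x4 *\<^sub>R (0, 0, 0, 1, 0)) (0, 0, 0, 1, 0)) (at x4)"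
    by (rule has_real_derivative_along_line[OF F]) (use t in auto)
  then show "d4 F z = F' z (0, 0, 0, 1, 0)"
    unfolding zt d4_def by (simp add: DERIV_imp_deriv)
qed

lemma convex_slice_above_tangent:
  fixes F :: "arg5 \<Rightarrow> real"
  assumes F: "\<And>z. z \<in> time_slab a b \<Longrightarrow> (F has_derivative F' z) (at z within time_slab a b)"
    and t: "t \<in> {a..b}"
    and conv: "convex_on UNIV (\<lambda>(x1, x2, x3, x4). F (x1, x2, x3, x4, t))"
  shows "d1 F (z1, z2, z3, z4, t) * (w1 - z1) + d2 F (z1, z2, z3, z4, t) * (w2 - z2)
       + d3 F (z1, z2, z3, z4, t) * (w3 - z3) + d4 F (z1, z2, z3, z4, t) * (w4 - z4)
       \<le> F (w1, w2, w3, w4, t) - F (z1, z2, z3, z4, t)"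
proof -
  define z where "z = (z1, z2, z3, z4, t)"
  define v where "v = (w1 - z1, w2 - z2, w3 - z3, w4 - z4, 0 :: real)"
  define \<phi> where "\<phi> = (\<lambda>s. F (z + s *\<^sub>R v))"
  have line: "z + s *\<^sub>R v \<in> time_slab a b" for s
    using t by (simp add: z_def v_def)
  have "convex_on UNIV \<phi>"
    using convex_on_line[OF conv, of "(z1, z2, z3, z4)" "(w1 - z1, w2 - z2, w3 - z3, w4 - z4)"]
    by (simp add: \<phi>_def z_def v_def)
  moreover have "(\<phi> has_real_derivative F' z v) (at 0)"
    unfolding \<phi>_def using has_real_derivative_along_line[OF F line, of 0] by simp
  ultimately have "F' z v * (1 - 0) \<le> \<phi> 1 - \<phi> 0"
    by (intro convex_on_imp_above_tangent) auto
  moreover have "F' z v = (w1 - z1) * F' z (1, 0, 0, 0, 0) + (w2 - z2) * F' z (0, 1, 0, 0, 0)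
      + (w3 - z3) * F' z (0, 0, 1, 0, 0) + (w4 - z4) * F' z (0, 0, 0, 1, 0)"
  proof -
    have l: "linear (F' z)"
      using F[OF line[of 0]] by (simp add: has_derivative_linear)
    have "F' z v = F' z ((w1 - z1) *\<^sub>R (1, 0, 0, 0, 0) + (w2 - z2) *\<^sub>R (0, 1, 0, 0, 0)
        + (w3 - z3) *\<^sub>R (0, 0, 1, 0, 0) + (w4 - z4) *\<^sub>R (0, 0, 0, 1, 0))"
      by (simp add: v_def)
    also have "\<dots> = (w1 - z1) *\<^sub>R F' z (1, 0, 0, 0, 0) + (w2 - z2) *\<^sub>R F' z (0, 1, 0, 0, 0)
        + (w3 - z3) *\<^sub>R F' z (0, 0, 1, 0, 0) + (w4 - z4) *\<^sub>R F' z (0, 0, 0, 1, 0)"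
      by (simp only: linear_add[OF l] linear_scale[OF l])
    finally show ?thesis
      by simp
  qed
  ultimately show ?thesis
    using partial_derivatives_eq[OF F line[of 0]] by (simp add: \<phi>_def z_def v_def algebra_simps)
qed

lemma adm_continuous_on:
  assumes ab: "a < b" and y: "y \<in> adm a b lam mu k ya yb"
  shows "continuous_on {a..b} y" "continuous_on {a..b} (dotd a b y)"
    "continuous_on {a..b} (KP a b lam mu k y)" "continuous_on {a..b} (BP a b lam mu k y)"
  using y C1_interval_imp_continuous_on continuous_on_dotd[OF ab] by (auto simp: adm_def)

lemma continuous_on_star:
  assumes "a < b" "y \<in> adm a b lam mu k ya yb"
  shows "continuous_on {a..b} (star a b lam mu k y)"
  unfolding star_def using adm_continuous_on[OF assms] by (intro continuous_intros)

lemma star_in_time_slab: "t \<in> {a..b} \<Longrightarrow> star a b lam mu k y t \<in> time_slab a b"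
  by (simp add: star_def)

definition first_variation_integrand ::
  "real \<Rightarrow> real \<Rightarrow> real \<Rightarrow> real \<Rightarrow> (real \<times> real \<Rightarrow> real) \<Rightarrow> (arg5 \<Rightarrow> real)
     \<Rightarrow> (real \<Rightarrow> real) \<Rightarrow> (real \<Rightarrow> real) \<Rightarrow> real \<Rightarrow> real" where
  "first_variation_integrand a b lam mu k F ybar y t =
     d1 F (star a b lam mu k ybar t) * (y t - ybar t)
   + d2 F (star a b lam mu k ybar t) * (KP a b lam mu k y t - KP a b lam mu k ybar t)
   + d3 F (star a b lam mu k ybar t) * (dotd a b y t - dotd a b ybar t)
   + d4 F (star a b lam mu k ybar t) * (BP a b lam mu k y t - BP a b lam mu k ybar t)"

context
  fixes a b lam mu :: real and k :: "real \<times> real \<Rightarrow> real"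
    and F :: "arg5 \<Rightarrow> real" and F' :: "arg5 \<Rightarrow> arg5 \<Rightarrow> real"
  assumes ab: "a < b"
    and F_deriv: "\<And>z. z \<in> time_slab a b \<Longrightarrow> (F has_derivative F' z) (at z within time_slab a b)"
    and F'_cont: "\<And>v. continuous_on (time_slab a b) (\<lambda>z. F' z v)"
begin

lemma continuous_on_partials_star:
  assumes y: "y \<in> adm a b lam mu k ya yb"
  shows "continuous_on {a..b} (\<lambda>t. d1 F (star a b lam mu k y t))"
    "continuous_on {a..b} (\<lambda>t. d2 F (star a b lam mu k y t))"
    "continuous_on {a..b} (\<lambda>t. d3 F (star a b lam mu k y t))"
    "continuous_on {a..b} (\<lambda>t. d4 F (star a b lam mu k y t))"
proof -
  have F'_star: "continuous_on {a..b} (\<lambda>t. F' (star a b lam mu k y t) v)" for v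
    using continuous_on_compose2[OF F'_cont continuous_on_star[OF ab y]] star_in_time_slab by blast
  note partials = partial_derivatives_eq[OF F_deriv star_in_time_slab]
  show "continuous_on {a..b} (\<lambda>t. d1 F (star a b lam mu k y t))"
    by (rule continuous_on_eq[OF F'_star]) (simp add: partials)
  show "continuous_on {a..b} (\<lambda>t. d2 F (star a b lam mu k y t))"
    by (rule continuous_on_eq[OF F'_star]) (simp add: partials)
  show "continuous_on {a..b} (\<lambda>t. d3 F (star a b lam mu k y t))"
    by (rule continuous_on_eq[OF F'_star]) (simp add: partials)
  show "continuous_on {a..b} (\<lambda>t. d4 F (star a b lam mu k y t))"
    by (rule continuous_on_eq[OF F'_star]) (simp add: partials)
qed

lemma Ifun_diff_ge_first_variation:
  assumes conv: "\<forall>t\<in>{a..b}. convex_on UNIV (\<lambda>(x1, x2, x3, x4). F (x1, x2, x3, x4, t))"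
    and y: "y \<in> adm a b lam mu k ya yb" and ybar: "ybar \<in> adm a b lam mu k ya yb"
  shows "(LINT t:{a..b}|lborel. first_variation_integrand a b lam mu k F ybar y t)
       \<le> Ifun a b lam mu k F y - Ifun a b lam mu k F ybar"
proof -
  have F_cont: "continuous_on (time_slab a b) F"
    using F_deriv has_derivative_continuous continuous_on_eq_continuous_within by blast
  have "continuous_on {a..b} (\<lambda>t. F (star a b lam mu k y t))"
    "continuous_on {a..b} (\<lambda>t. F (star a b lam mu k ybar t))"
    using continuous_on_compose2[OF F_cont continuous_on_star[OF ab y]]
      continuous_on_compose2[OF F_cont continuous_on_star[OF ab ybar]] star_in_time_slab
    by blast+
  then have "Ifun a b lam mu k F y - Ifun a b lam mu k F ybar
      = (LINT t:{a..b}|lborel. F (star a b lam mu k y t) - F (star a b lam mu k ybar t))"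
    unfolding Ifun_def by (simp add: borel_integrable_atLeastAtMost')
  moreover have "continuous_on {a..b} (first_variation_integrand a b lam mu k F ybar y)"
    unfolding first_variation_integrand_def
    using adm_continuous_on[OF ab y] adm_continuous_on[OF ab ybar] continuous_on_partials_star[OF ybar]
    by (intro continuous_intros)
  ultimately show ?thesis
    using \<open>continuous_on {a..b} (\<lambda>t. F (star a b lam mu k y t))\<close>
      \<open>continuous_on {a..b} (\<lambda>t. F (star a b lam mu k ybar t))\<close>
    by (auto intro!: set_integral_mono borel_integrable_atLeastAtMost' continuous_intros
        simp: first_variation_integrand_def star_def conv convex_slice_above_tangent[OF F_deriv])
qed

context
  assumes kint: "set_integrable lborel (Delta a b) k"
begin

lemma integral_first_variation_integrand_by_parts:
  assumes y: "y \<in> adm a b lam mu k ya yb" and ybar: "ybar \<in> adm a b lam mu k ya yb"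
    and reg2: "continuous_on {a..b} (KPs a b lam mu k (\<lambda>\<tau>. d2 F (star a b lam mu k ybar \<tau>)))"
    and reg3: "C1_interval a b (\<lambda>t. d3 F (star a b lam mu k ybar t))"
    and reg4: "C1_interval a b (KPs a b lam mu k (\<lambda>\<tau>. d4 F (star a b lam mu k ybar \<tau>)))"
  shows "(LINT t:{a..b}|lborel. first_variation_integrand a b lam mu k F ybar y t)
       = (LINT t:{a..b}|lborel. (y t - ybar t) *
           (d1 F (star a b lam mu k ybar t)
            + KPs a b lam mu k (\<lambda>\<tau>. d2 F (star a b lam mu k ybar \<tau>)) t
            - dotd a b (\<lambda>t. d3 F (star a b lam mu k ybar t)) t
            - dotd a b (KPs a b lam mu k (\<lambda>\<tau>. d4 F (star a b lam mu k ybar \<tau>))) t))"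
    (is "_ = (LINT t:{a..b}|lborel. ?\<Delta> t * (?g1 t + ?h2 t - dotd a b ?g3 t - dotd a b ?h4 t))")
proof -
  let ?g2 = "\<lambda>t. d2 F (star a b lam mu k ybar t)" and ?g4 = "\<lambda>t. d4 F (star a b lam mu k ybar t)"
  note cont = adm_continuous_on[OF ab y] adm_continuous_on[OF ab ybar] continuous_on_partials_star[OF ybar]
    reg2 C1_interval_imp_continuous_on[OF reg3] C1_interval_imp_continuous_on[OF reg4]
    continuous_on_dotd[OF ab reg3] continuous_on_dotd[OF ab reg4]
  have ends: "C1_interval a b y" "C1_interval a b ybar" "y a = ybar a" "y b = ybar b"
    using y ybar by (auto simp: adm_def)
  have I2: "(LINT t:{a..b}|lborel. ?g2 t * (KP a b lam mu k y t - KP a b lam mu k ybar t))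
      = (LINT t:{a..b}|lborel. ?\<Delta> t * ?h2 t)"
    using cont by (intro KP_adjoint_diff kint)
  have I3: "(LINT t:{a..b}|lborel. ?g3 t * (dotd a b y t - dotd a b ybar t))
      = - (LINT t:{a..b}|lborel. ?\<Delta> t * dotd a b ?g3 t)"
    using integral_by_parts_same_boundary[OF ab ends reg3] by (simp only: mult.commute)
  have I4: "(LINT t:{a..b}|lborel. ?g4 t * (BP a b lam mu k y t - BP a b lam mu k ybar t))
      = - (LINT t:{a..b}|lborel. ?\<Delta> t * dotd a b ?h4 t)"
    unfolding BP_def using cont integral_by_parts_same_boundary[OF ab ends reg4]
    by (simp add: KP_adjoint_diff[OF kint])
  have int: "set_integrable lborel {a..b} (\<lambda>t. ?g1 t * ?\<Delta> t)"
    "set_integrable lborel {a..b} (\<lambda>t. ?g2 t * (KP a b lam mu k y t - KP a b lam mu k ybar t))"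
    "set_integrable lborel {a..b} (\<lambda>t. ?g3 t * (dotd a b y t - dotd a b ybar t))"
    "set_integrable lborel {a..b} (\<lambda>t. ?g4 t * (BP a b lam mu k y t - BP a b lam mu k ybar t))"
    "set_integrable lborel {a..b} (\<lambda>t. ?\<Delta> t * ?g1 t)"
    "set_integrable lborel {a..b} (\<lambda>t. ?\<Delta> t * ?h2 t)"
    "set_integrable lborel {a..b} (\<lambda>t. ?\<Delta> t * dotd a b ?g3 t)"
    "set_integrable lborel {a..b} (\<lambda>t. ?\<Delta> t * dotd a b ?h4 t)"
    using cont by (auto intro!: borel_integrable_atLeastAtMost' continuous_intros)
  have "(LINT t:{a..b}|lborel. first_variation_integrand a b lam mu k F ybar y t)
      = (LINT t:{a..b}|lborel. ?\<Delta> t * ?g1 t) + (LINT t:{a..b}|lborel. ?\<Delta> t * ?h2 t)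
        - (LINT t:{a..b}|lborel. ?\<Delta> t * dotd a b ?g3 t) - (LINT t:{a..b}|lborel. ?\<Delta> t * dotd a b ?h4 t)"
    unfolding first_variation_integrand_def using int I2 I3 I4 by (simp add: mult.commute)
  also have "\<dots> = (LINT t:{a..b}|lborel. ?\<Delta> t * ?g1 t + ?\<Delta> t * ?h2 t - ?\<Delta> t * dotd a b ?g3 t - ?\<Delta> t * dotd a b ?h4 t)"
    using int by simp
  also have "\<dots> = (LINT t:{a..b}|lborel. ?\<Delta> t * (?g1 t + ?h2 t - dotd a b ?g3 t - dotd a b ?h4 t))"
    by (simp only: distrib_left right_diff_distrib)
  finally show ?thesis .
qed

lemma integral_first_variation_integrand_eq_0:
  assumes y: "y \<in> adm a b lam mu k ya yb" and ybar: "ybar \<in> adm a b lam mu k ya yb"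
    and reg: "continuous_on {a..b} (KPs a b lam mu k (\<lambda>\<tau>. d2 F (star a b lam mu k ybar \<tau>))) \<and>
         C1_interval a b (\<lambda>t. d3 F (star a b lam mu k ybar t)) \<and>
         C1_interval a b (KPs a b lam mu k (\<lambda>\<tau>. d4 F (star a b lam mu k ybar \<tau>)))"
    and EL: "\<forall>t\<in>{a<..<b}.
         deriv (\<lambda>s. d3 F (star a b lam mu k ybar s)) t
         + APs a b lam mu k (\<lambda>\<tau>. d4 F (star a b lam mu k ybar \<tau>)) t
         = d1 F (star a b lam mu k ybar t)
         + KPs a b lam mu k (\<lambda>\<tau>. d2 F (star a b lam mu k ybar \<tau>)) t"
  shows "(LINT t:{a..b}|lborel. first_variation_integrand a b lam mu k F ybar y t) = 0"
proof -
  let ?g3 = "\<lambda>t. d3 F (star a b lam mu k ybar t)"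
  have vanish: "(y t - ybar t) *
      (d1 F (star a b lam mu k ybar t)
       + KPs a b lam mu k (\<lambda>\<tau>. d2 F (star a b lam mu k ybar \<tau>)) t
       - dotd a b ?g3 t
       - dotd a b (KPs a b lam mu k (\<lambda>\<tau>. d4 F (star a b lam mu k ybar \<tau>))) t) = 0"
    if t: "t \<in> {a..b}" for t
  proof (cases "t \<in> {a<..<b}")
    case True
    have "(?g3 has_real_derivative dotd a b ?g3 t) (at t)"
      using C1_interval_has_derivative_dotd[OF ab _ t] reg True by (simp add: at_within_Icc_at)
    then have "deriv ?g3 t = dotd a b ?g3 t"
      by (rule DERIV_imp_deriv)
    with bspec[OF EL True] show ?thesis
      by (simp add: APs_def)
  next
    case False
    then have "t = a \<or> t = b"
      using t by auto
    then show ?thesis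
      using y ybar by (auto simp: adm_def)
  qed
  have "(LINT t:{a..b}|lborel. first_variation_integrand a b lam mu k F ybar y t) = (LINT t:{a..b}|lborel. 0)"
    unfolding integral_first_variation_integrand_by_parts[OF y ybar reg[THEN conjunct1]
        reg[THEN conjunct2, THEN conjunct1] reg[THEN conjunct2, THEN conjunct2]]
    using vanish by (intro set_lebesgue_integral_cong) auto
  then show ?thesis
    by simp
qed

end

end

theorem mainTheorem4:
  fixes a b p q lam mu ya yb :: real
    and k :: "real \<times> real \<Rightarrow> real"
    and F :: "arg5 \<Rightarrow> real"
    and ybar :: "real \<Rightarrow> real"
  assumes ab: "a < b"
    and p: "1 < p" and q: "q = p / (p - 1)"
    and k: "in_Lq q (Delta a b) k"
    and F: "C1_on (UNIV \<times> UNIV \<times> UNIV \<times> UNIV \<times> {a..b}) F"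
    and reg: "\<forall>y\<in>adm a b lam mu k ya yb.
         continuous_on {a..b} (KPs a b lam mu k (\<lambda>\<tau>. d2 F (star a b lam mu k y \<tau>))) \<and>
         C1_interval a b (\<lambda>t. d3 F (star a b lam mu k y t)) \<and>
         C1_interval a b (KPs a b lam mu k (\<lambda>\<tau>. d4 F (star a b lam mu k y \<tau>)))"
    and ybar: "ybar \<in> adm a b lam mu k ya yb"
    and EL: "\<forall>t\<in>{a<..<b}.
         deriv (\<lambda>s. d3 F (star a b lam mu k ybar s)) t
         + APs a b lam mu k (\<lambda>\<tau>. d4 F (star a b lam mu k ybar \<tau>)) t
         = d1 F (star a b lam mu k ybar t)
         + KPs a b lam mu k (\<lambda>\<tau>. d2 F (star a b lam mu k ybar \<tau>)) t"
    and conv: "\<forall>t\<in>{a..b}. convex_on UNIV (\<lambda>(x1, x2, x3, x4). F (x1, x2, x3, x4, t))"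
  shows "local_minimizer a b (Ifun a b lam mu k F) (adm a b lam mu k ya yb) ybar"
proof -
  have "1 \<le> q"
    using p q by (simp add: le_divide_eq)
  then have kint: "set_integrable lborel (Delta a b) k"
    using set_integrable_if_in_Lq k Delta_in_sets_lborel emeasure_Delta_finite by blast
  obtain F' where F_deriv: "\<And>z. z \<in> time_slab a b \<Longrightarrow> (F has_derivative F' z) (at z within time_slab a b)"
    and F'_cont: "\<And>v. continuous_on (time_slab a b) (\<lambda>z. F' z v)"
    using F unfolding C1_on_def by blast
  have "Ifun a b lam mu k F ybar \<le> Ifun a b lam mu k F y" if y: "y \<in> adm a b lam mu k ya yb" for y
    using Ifun_diff_ge_first_variation[OF ab F_deriv F'_cont conv y ybar]
      integral_first_variation_integrand_eq_0[OF ab F_deriv F'_cont kint y ybar] reg ybar EL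
    by simp
  then show ?thesis
    unfolding local_minimizer_def using ybar by (intro conjI exI[of _ 1]) auto
qed

end
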